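(* Let $d\ge 1$, $\gamma>0$, and let $f_I\in C^1(\mathbb{R}^d)\cap L^\infty(\mathbb{R}^d)$ be nonnegative, not identically zero, radially symmetric and radially non-increasing (i.e. $f_I(x)=\tilde f_I(|x|)$ with $\tilde f_I$ non-increasing on $[0,\infty)$). Set $t^*=\bigl(\gamma d\,\max f_I^\gamma\bigr)^{-1}$. Then there exists a classical solution $\rho\in C^1(\mathbb{R}^d\times[0,t^* ))$ of $$\partial_t\rho-(1+\gamma)\rho^{\gamma}\,x\cdot\nabla\rho=d\,\rho^{1+\gamma},\qquad \rho(x,0)=f_I(x),$$ (equivalently of $\partial_t\rho-\nabla\cdot(x\rho^{1+\gamma})=0$), given along characteristics by $\rho\bigl(x_0(1-\gamma d f_I^\gamma(x_0)t)^{(1+\gamma)/(\gamma d)},t\bigr)=f_I(x_0)\,(1-\gamma d f_I^\gamma(x_0)t)^{-1/\gamma}$, and this solution blows up at the origin at time $t^*$: $$\lim_{(x,t)\to(0,t^* )}\rho(x,t)=+\infty .$$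
   Context: The parameter $\gamma>0$ is fixed. This concerns the equation $\partial_t\rho-\nabla\cdot(x\rho^{1+\gamma})=0$ on $\mathbb{R}^d\times[0,\infty)$, written in non-conservative form for smooth solutions. *)

theory Defs
  imports "HOL-Analysis.Analysis"
begin

definition C1_fun :: "(real^'n \<Rightarrow> real) \<Rightarrow> bool" where
  "C1_fun f \<longleftrightarrow> (\<exists>g :: real^'n \<Rightarrow> real^'n.
      (\<forall>x. (f has_derivative (\<lambda>h. g x \<bullet> h)) (at x)) \<and> continuous_on UNIV g)"

definition radial_nonincr :: "(real^'n \<Rightarrow> real) \<Rightarrow> bool" where
  "radial_nonincr f \<longleftrightarrow> (\<exists>ft :: real \<Rightarrow> real.
      (\<forall>x. f x = ft (norm x)) \<and> (\<forall>r s. 0 \<le> r \<longrightarrow> r \<le> s \<longrightarrow> ft s \<le> ft r))"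

definition C1_on_strip :: "(real^'n \<Rightarrow> real \<Rightarrow> real) \<Rightarrow> (real^'n \<Rightarrow> real \<Rightarrow> real)
    \<Rightarrow> (real^'n \<Rightarrow> real \<Rightarrow> real^'n) \<Rightarrow> real \<Rightarrow> bool" where
  "C1_on_strip rho rt gr T \<longleftrightarrow>
     (\<forall>x t. 0 \<le> t \<and> t < T \<longrightarrow>
        ((\<lambda>(y,s). rho y s) has_derivative (\<lambda>(h,k). gr x t \<bullet> h + rt x t * k))
          (at (x,t) within (UNIV \<times> {0..<T}))) \<and>
     continuous_on (UNIV \<times> {0..<T}) (\<lambda>(y,s). rt y s) \<and>
     continuous_on (UNIV \<times> {0..<T}) (\<lambda>(y,s). gr y s)"

end

theory Submission
  imports Defs
begin

text \<open>Along the characteristic starting at y the solution is explicit: with c = \<gamma> d and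
  \<alpha> = (1 + \<gamma>) / c it runs along the ray x = s^\<alpha> y, s = 1 - c t f(y)^\<gamma>, and carries the value
  f(y) s^(-1/\<gamma>). Because f is radially non-increasing, for t < t* the equation
  s = 1 - c t f(s^-\<alpha> x)^\<gamma> has exactly one root s = \<sigma>(x, t) > 0 (the difference of its sides is
  strictly increasing in s), so characteristics do not cross and
  \<rho>(x, t) = f(\<sigma>^-\<alpha> x) \<sigma>^(-1/\<gamma>) is well defined. Where f(\<sigma>^-\<alpha> x) > 0 the implicit function
  theorem makes \<sigma>, hence \<rho>, continuously differentiable; the s-derivative is at least 1 since
  x \<cdot> \<nabla>f \<le> 0. Where f(\<sigma>^-\<alpha> x) = 0, f attains its minimum, so \<rho> is dominated by f and flat.
  Near (0, t*) the root \<sigma> tends to 0 while f(\<sigma>^-\<alpha> x) tends to f(0) > 0, so \<rho> blows up.\<close>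

lemma tendsto_scaleR_inverse_ge1_zero:
  fixes N :: "'a \<Rightarrow> 'b::real_normed_vector"
  assumes "(N \<longlongrightarrow> 0) F" and "eventually (\<lambda>p. 1 \<le> D p) F"
  shows "((\<lambda>p. N p /\<^sub>R D p) \<longlongrightarrow> 0) F"
proof (rule Lim_null_comparison)
  show "eventually (\<lambda>p. norm (N p /\<^sub>R D p) \<le> norm (N p)) F"
    using assms(2) by eventually_elim (auto intro!: mult_left_le_one_le simp: inverse_le_1_iff)
  show "((\<lambda>p. norm (N p)) \<longlongrightarrow> 0) F"
    using tendsto_norm_zero[OF assms(1)] .
qed

lemma continuous_on_scaleR_inverse_ge1:
  fixes N :: "'a::t2_space \<Rightarrow> 'b::real_normed_vector"
  assumes N: "continuous_on S N" and D: "\<And>p. p \<in> S \<Longrightarrow> 1 \<le> D p"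
    and D_cont: "\<And>p. p \<in> S \<Longrightarrow> N p \<noteq> 0 \<Longrightarrow> continuous (at p within S) D"
  shows "continuous_on S (\<lambda>p. N p /\<^sub>R D p)"
  unfolding continuous_on_eq_continuous_within
proof
  fix p assume p: "p \<in> S"
  have N_p: "continuous (at p within S) N"
    using N p by (simp add: continuous_on_eq_continuous_within)
  show "continuous (at p within S) (\<lambda>p. N p /\<^sub>R D p)"
  proof (cases "N p = 0")
    case True
    have "eventually (\<lambda>q. 1 \<le> D q) (at p within S)"
      using D by (auto simp: eventually_at_filter)
    with N_p True show ?thesis
      unfolding continuous_within by (simp add: tendsto_scaleR_inverse_ge1_zero)
  next
    case False
    with D[OF p] D_cont[OF p] N_p show ?thesis by (intro continuous_intros) auto
  qed
qed

lemma real_linearized_root_error: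
  fixes a l \<delta> \<eta> K n :: real
  assumes lin: "\<bar>a * \<delta> + l\<bar> \<le> \<eta> * (\<bar>\<delta>\<bar> + n)" and l: "\<bar>l\<bar> \<le> K * n"
    and \<eta>: "0 \<le> \<eta>" "2 * \<eta> \<le> \<bar>a\<bar>" and "0 \<le> n" "a \<noteq> 0"
  shows "\<bar>\<delta> + l / a\<bar> \<le> \<eta> * (2 * (K + \<bar>a\<bar>) / a\<^sup>2) * n"
proof -
  have "\<bar>a\<bar> * \<bar>\<delta>\<bar> \<le> \<eta> * (\<bar>\<delta>\<bar> + n) + K * n"
    using lin l abs_triangle_ineq4[of "a * \<delta> + l" l] by (simp add: abs_mult)
  then have "\<bar>a\<bar> / 2 * \<bar>\<delta>\<bar> \<le> (\<eta> + K) * n"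
    using \<eta> mult_right_mono[OF \<eta>(2), of "\<bar>\<delta>\<bar>"] by (simp add: algebra_simps)
  then have \<delta>: "\<bar>\<delta>\<bar> \<le> 2 * (\<eta> + K) / \<bar>a\<bar> * n"
    using \<open>a \<noteq> 0\<close> by (simp add: field_simps)
  have "\<bar>\<delta> + l / a\<bar> = \<bar>a * \<delta> + l\<bar> / \<bar>a\<bar>"
    using \<open>a \<noteq> 0\<close> by (simp add: field_simps flip: abs_divide)
  also have "\<dots> \<le> \<eta> * (2 * (\<eta> + K) / \<bar>a\<bar> * n + n) / \<bar>a\<bar>"
    using lin \<delta> \<eta> by (intro divide_right_mono order.trans[OF lin] mult_left_mono) auto
  also have "\<dots> \<le> \<eta> * (2 * (K + \<bar>a\<bar>) / a\<^sup>2) * n"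
  proof -
    have "2 * \<eta> / \<bar>a\<bar> \<le> 1"
      using \<eta> \<open>a \<noteq> 0\<close> by simp
    then have "2 * \<eta> / \<bar>a\<bar> * n \<le> n"
      using mult_right_mono[of _ 1 n] \<open>0 \<le> n\<close> by fastforce
    then have "2 * (\<eta> + K) / \<bar>a\<bar> * n + n \<le> (2 * K / \<bar>a\<bar> + 2) * n"
      by (simp add: add_divide_distrib distrib_right)
    also have "\<dots> = 2 * (K + \<bar>a\<bar>) / \<bar>a\<bar> * n"
      using \<open>a \<noteq> 0\<close> by (simp add: field_simps)
    finally have "2 * (\<eta> + K) / \<bar>a\<bar> * n + n \<le> 2 * (K + \<bar>a\<bar>) / \<bar>a\<bar> * n" .
    then have "\<eta> * (2 * (\<eta> + K) / \<bar>a\<bar> * n + n) / \<bar>a\<bar> \<le> \<eta> * (2 * (K + \<bar>a\<bar>) / \<bar>a\<bar> * n) / \<bar>a\<bar>"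
      using \<eta> by (intro divide_right_mono mult_left_mono) auto
    also have "\<dots> = \<eta> * (2 * (K + \<bar>a\<bar>) / \<bar>a\<bar>\<^sup>2) * n"
      by (simp add: power2_eq_square)
    finally show ?thesis by simp
  qed
  finally show ?thesis .
qed

lemma implicit_root_linearization:
  fixes \<sigma> :: "'a::real_normed_vector \<Rightarrow> real" and \<Phi> :: "real \<times> 'a \<Rightarrow> real"
  assumes d\<Phi>: "(\<Phi> has_derivative D\<Phi>) (at (\<sigma> p0, p0))"
    and root: "\<And>p. p \<in> S \<Longrightarrow> \<Phi> (\<sigma> p, p) = 0" and p0: "p0 \<in> S"
    and cont: "continuous (at p0 within S) \<sigma>" and "0 < \<eta>"
  shows "eventually (\<lambda>p. \<bar>D\<Phi> (\<sigma> p - \<sigma> p0, p - p0)\<bar> \<le> \<eta> * (\<bar>\<sigma> p - \<sigma> p0\<bar> + norm (p - p0)))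
           (at p0 within S)"
proof -
  let ?y0 = "(\<sigma> p0, p0)"
  have "eventually (\<lambda>y. norm (\<Phi> y - \<Phi> ?y0 - D\<Phi> (y - ?y0)) \<le> \<eta> * norm (y - ?y0)) (nhds ?y0)"
    using d\<Phi> \<open>0 < \<eta>\<close> linear_0[OF bounded_linear.linear[OF has_derivative_bounded_linear[OF d\<Phi>]]]
    unfolding eventually_nhds_conv_at has_derivative_within_alt2 by auto
  moreover have "((\<lambda>p. (\<sigma> p, p)) \<longlongrightarrow> ?y0) (at p0 within S)"
    using cont unfolding continuous_within by (intro tendsto_Pair tendsto_ident_at)
  ultimately have "eventually (\<lambda>p. norm (\<Phi> (\<sigma> p, p) - \<Phi> ?y0 - D\<Phi> ((\<sigma> p, p) - ?y0))
      \<le> \<eta> * norm ((\<sigma> p, p) - ?y0)) (at p0 within S)"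
    by (rule eventually_compose_filterlim)
  moreover have "eventually (\<lambda>p. p \<in> S) (at p0 within S)"
    by (simp add: eventually_at_filter)
  ultimately show ?thesis
  proof eventually_elim
    case (elim p)
    then have "\<bar>D\<Phi> (\<sigma> p - \<sigma> p0, p - p0)\<bar> \<le> \<eta> * norm (\<sigma> p - \<sigma> p0, p - p0)"
      using root[OF elim(2)] root[OF p0] by simp
    also have "\<dots> \<le> \<eta> * (\<bar>\<sigma> p - \<sigma> p0\<bar> + norm (p - p0))"
      using \<open>0 < \<eta>\<close> norm_Pair_le[of "\<sigma> p - \<sigma> p0" "p - p0"] by (intro mult_left_mono) auto
    finally show ?case .
  qed
qed

lemma has_derivative_implicit_real:
  fixes \<sigma> :: "'a::real_normed_vector \<Rightarrow> real" and \<Phi> :: "real \<times> 'a \<Rightarrow> real"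
  assumes d\<Phi>: "(\<Phi> has_derivative D\<Phi>) (at (\<sigma> p0, p0))" and nondeg: "D\<Phi> (1, 0) \<noteq> 0"
    and root: "\<And>p. p \<in> S \<Longrightarrow> \<Phi> (\<sigma> p, p) = 0" and p0: "p0 \<in> S"
    and cont: "continuous (at p0 within S) \<sigma>"
  shows "(\<sigma> has_derivative (\<lambda>h. - D\<Phi> (0, h) / D\<Phi> (1, 0))) (at p0 within S)"
proof -
  interpret D\<Phi>: bounded_linear D\<Phi>
    using d\<Phi> by (rule has_derivative_bounded_linear)
  define a where "a = D\<Phi> (1, 0)"
  have split: "D\<Phi> (\<delta>, h) = a * \<delta> + D\<Phi> (0, h)" for \<delta> h
    using D\<Phi>.add[of "\<delta> *\<^sub>R (1, 0)" "(0, h)"] D\<Phi>.scale[of \<delta> "(1, 0)"] by (simp add: a_def)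
  have L: "bounded_linear (\<lambda>h. D\<Phi> (0, h))"
    by (rule bounded_linear_compose[OF D\<Phi>.bounded_linear]) (simp add: bounded_linear_Pair)
  obtain K where K: "0 < K" "\<And>h. norm (D\<Phi> (0, h)) \<le> norm h * K"
    using bounded_linear.pos_bounded[OF L] by blast
  show ?thesis
    unfolding has_derivative_within_alt2
  proof (intro conjI allI impI)
    show "bounded_linear (\<lambda>h. - D\<Phi> (0, h) / D\<Phi> (1, 0))"
      by (rule bounded_linear_compose[OF bounded_linear_divide bounded_linear_minus[OF L]])
  next
    fix e :: real assume "0 < e"
    define C where "C = 2 * (K + \<bar>a\<bar>) / a\<^sup>2"
    have "0 < C"
      using K nondeg by (simp add: C_def a_def add_pos_nonneg)
    define \<eta> where "\<eta> = min (\<bar>a\<bar> / 2) (e / C)"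
    have \<eta>: "0 < \<eta>" "2 * \<eta> \<le> \<bar>a\<bar>"
      using \<open>0 < e\<close> \<open>0 < C\<close> nondeg unfolding \<eta>_def a_def by auto
    have "\<eta> * C \<le> e"
      using min.cobounded2[of "\<bar>a\<bar> / 2" "e / C"] \<open>0 < C\<close>
      unfolding \<eta>_def by (simp only: pos_le_divide_eq)
    show "eventually (\<lambda>p. norm (\<sigma> p - \<sigma> p0 - - D\<Phi> (0, p - p0) / D\<Phi> (1, 0)) \<le> e * norm (p - p0))
        (at p0 within S)"
    proof (rule eventually_mono[OF implicit_root_linearization[OF d\<Phi> root p0 cont \<open>0 < \<eta>\<close>]])
      fix p
      assume lin: "\<bar>D\<Phi> (\<sigma> p - \<sigma> p0, p - p0)\<bar> \<le> \<eta> * (\<bar>\<sigma> p - \<sigma> p0\<bar> + norm (p - p0))"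
      have "\<bar>\<sigma> p - \<sigma> p0 + D\<Phi> (0, p - p0) / a\<bar> \<le> \<eta> * C * norm (p - p0)"
        unfolding C_def
      proof (rule real_linearized_root_error)
        show "\<bar>a * (\<sigma> p - \<sigma> p0) + D\<Phi> (0, p - p0)\<bar> \<le> \<eta> * (\<bar>\<sigma> p - \<sigma> p0\<bar> + norm (p - p0))"
          using lin by (simp only: split[of "\<sigma> p - \<sigma> p0" "p - p0"])
        show "\<bar>D\<Phi> (0, p - p0)\<bar> \<le> K * norm (p - p0)"
          using K(2)[of "p - p0"] by (simp add: mult.commute)
      qed (use \<eta> nondeg in \<open>auto simp: a_def\<close>)
      also have "\<dots> \<le> e * norm (p - p0)"
        using \<open>\<eta> * C \<le> e\<close> by (intro mult_right_mono) auto
      finally show "norm (\<sigma> p - \<sigma> p0 - - D\<Phi> (0, p - p0) / D\<Phi> (1, 0)) \<le> e * norm (p - p0)"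
        by (simp add: a_def)
    qed
  qed
qed

lemma increasing_root_less_iff:
  fixes \<phi> :: "real \<Rightarrow> real"
  assumes mono: "\<And>s s'. 0 < s \<Longrightarrow> s < s' \<Longrightarrow> \<phi> s < \<phi> s'"
    and "0 < r" "\<phi> r = 0" "0 < s"
  shows "r < s \<longleftrightarrow> 0 < \<phi> s" and "s < r \<longleftrightarrow> \<phi> s < 0"
proof -
  show "r < s \<longleftrightarrow> 0 < \<phi> s"
    using mono[of r s] mono[of s r] assms(2-4) by (cases r s rule: linorder_cases) auto
  show "s < r \<longleftrightarrow> \<phi> s < 0"
    using mono[of r s] mono[of s r] assms(2-4) by (cases r s rule: linorder_cases) auto
qed

lemma continuous_within_increasing_root:
  fixes \<Phi> :: "real \<Rightarrow> 'a::t2_space \<Rightarrow> real"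
  assumes root: "\<And>p. p \<in> S \<Longrightarrow> 0 < \<sigma> p \<and> \<Phi> (\<sigma> p) p = 0"
    and mono: "\<And>p s s'. p \<in> S \<Longrightarrow> 0 < s \<Longrightarrow> s < s' \<Longrightarrow> \<Phi> s p < \<Phi> s' p"
    and cont: "\<And>s. 0 < s \<Longrightarrow> continuous (at p0 within S) (\<Phi> s)"
    and p0: "p0 \<in> S"
  shows "continuous (at p0 within S) \<sigma>"
proof -
  have less_iff: "\<sigma> p < s \<longleftrightarrow> 0 < \<Phi> s p" "s < \<sigma> p \<longleftrightarrow> \<Phi> s p < 0" if "p \<in> S" "0 < s" for p s
    using increasing_root_less_iff[where \<phi> = "\<lambda>s. \<Phi> s p"] mono[OF that(1)] root[OF that(1)] that(2)
    by blast+
  have in_S: "eventually (\<lambda>p. p \<in> S) (at p0 within S)"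
    by (simp add: eventually_at_filter)
  show ?thesis
    unfolding continuous_within
  proof (rule order_tendstoI)
    fix b assume "\<sigma> p0 < b"
    with root[OF p0] have "0 < b" "0 < \<Phi> b p0"
      using less_iff(1)[OF p0, of b] by auto
    with cont[OF \<open>0 < b\<close>] have "eventually (\<lambda>p. 0 < \<Phi> b p) (at p0 within S)"
      unfolding continuous_within by (auto intro: order_tendstoD(1))
    with in_S show "eventually (\<lambda>p. \<sigma> p < b) (at p0 within S)"
      by eventually_elim (simp add: less_iff(1) \<open>0 < b\<close>)
  next
    fix a assume "a < \<sigma> p0"
    show "eventually (\<lambda>p. a < \<sigma> p) (at p0 within S)"
    proof (cases "0 < a")
      case True
      with \<open>a < \<sigma> p0\<close> cont[OF True] have "eventually (\<lambda>p. \<Phi> a p < 0) (at p0 within S)"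
        unfolding continuous_within using less_iff(2)[OF p0 True] by (auto intro: order_tendstoD(2))
      with in_S show ?thesis
        by eventually_elim (simp add: less_iff(2) True)
    next
      case False
      from in_S show ?thesis
        by eventually_elim (use root False in fastforce)
    qed
  qed
qed

lemma inner_gradient_nonpos_if_antimono_on_ray:
  fixes f :: "'a::real_inner \<Rightarrow> real"
  assumes f': "(f has_derivative (\<lambda>h. g \<bullet> h)) (at x)"
    and ray: "\<And>r. 1 \<le> r \<Longrightarrow> f (r *\<^sub>R x) \<le> f x"
  shows "g \<bullet> x \<le> 0"
proof (rule ccontr)
  assume "\<not> g \<bullet> x \<le> 0"
  have "((\<lambda>r. (1 + r) *\<^sub>R x) has_derivative (\<lambda>r. r *\<^sub>R x)) (at 0)"
    by (auto intro!: derivative_eq_intros)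
  moreover have "(f has_derivative (\<lambda>h. g \<bullet> h)) (at ((1 + 0) *\<^sub>R x))"
    using f' by simp
  ultimately have "((\<lambda>r. f ((1 + r) *\<^sub>R x)) has_derivative (\<lambda>r. g \<bullet> (r *\<^sub>R x))) (at 0)"
    by (rule has_derivative_compose)
  moreover have "(\<lambda>r. r * (g \<bullet> x)) = (*) (g \<bullet> x)"
    by (auto simp: fun_eq_iff)
  ultimately have "((\<lambda>r. f ((1 + r) *\<^sub>R x)) has_real_derivative g \<bullet> x) (at 0)"
    by (simp add: has_field_derivative_def)
  from DERIV_pos_inc_right[OF this] \<open>\<not> g \<bullet> x \<le> 0\<close>
  obtain e where "0 < e" "\<And>h. 0 < h \<Longrightarrow> h < e \<Longrightarrow> f x < f ((1 + h) *\<^sub>R x)"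
    by auto
  from this(2)[of "e / 2"] ray[of "1 + e / 2"] \<open>0 < e\<close> show False
    by simp
qed

lemma has_derivative_zero_if_dominated:
  fixes f :: "'a::real_normed_vector \<Rightarrow> real" and g :: "'a \<times> 'b::real_normed_vector \<Rightarrow> real"
  assumes f': "(f has_derivative (\<lambda>_. 0)) (at x0)" and "f x0 = 0" and "g (x0, t0) = 0"
    and dom: "eventually (\<lambda>p. \<bar>g p\<bar> \<le> K * \<bar>f (fst p)\<bar>) (at (x0, t0) within S)"
  shows "(g has_derivative (\<lambda>_. 0)) (at (x0, t0) within S)"
  unfolding has_derivative_within_alt2
proof (intro conjI allI impI)
  show "bounded_linear (\<lambda>_. 0::real)"
    by simp
  fix e :: real assume "0 < e"
  define K' where "K' = max K 1"
  have "0 < e / K'"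
    using \<open>0 < e\<close> by (simp add: K'_def)
  with f' have "eventually (\<lambda>y. norm (f y - f x0 - 0) \<le> e / K' * norm (y - x0)) (at x0)"
    unfolding has_derivative_within_alt2 by blast
  with \<open>f x0 = 0\<close> have "eventually (\<lambda>y. \<bar>f y\<bar> \<le> e / K' * norm (y - x0)) (nhds x0)"
    by (simp add: eventually_nhds_conv_at)
  moreover have "(fst \<longlongrightarrow> x0) (at (x0, t0) within S)"
    using tendsto_fst[OF tendsto_ident_at[of "(x0, t0)" S]] by simp
  ultimately have "eventually (\<lambda>p. \<bar>f (fst p)\<bar> \<le> e / K' * norm (fst p - x0)) (at (x0, t0) within S)"
    by (rule eventually_compose_filterlim)
  with dom show "eventually (\<lambda>p. norm (g p - g (x0, t0) - 0) \<le> e * norm (p - (x0, t0)))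
      (at (x0, t0) within S)"
  proof eventually_elim
    case (elim p)
    have "\<bar>g p\<bar> \<le> K' * \<bar>f (fst p)\<bar>"
      using elim(1) mult_right_mono[of K K' "\<bar>f (fst p)\<bar>"] by (simp add: K'_def)
    also have "\<dots> \<le> K' * (e / K' * norm (fst p - x0))"
      using elim(2) by (intro mult_left_mono) (auto simp: K'_def)
    also have "\<dots> = e * norm (fst (p - (x0, t0)))"
      by (simp add: K'_def)
    also have "\<dots> \<le> e * norm (p - (x0, t0))"
      using \<open>0 < e\<close> norm_fst_le[of "fst p - x0" "snd p - t0"] by (cases p) simp
    finally show ?case
      using \<open>g (x0, t0) = 0\<close> by simp
  qed
qed

lemma filterlim_powr_at_right_0:
  fixes a :: real
  assumes "a < 0"
  shows "filterlim (\<lambda>s. s powr a) at_top (at_right 0)"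
  unfolding filterlim_at_top eventually_at_right_field
proof (intro allI exI conjI impI)
  fix B :: real
  show "(0::real) < max B 1 powr (1 / a)"
    by simp
  fix s :: real assume "0 < s" "s < max B 1 powr (1 / a)"
  then have "(max B 1 powr (1 / a)) powr a \<le> s powr a"
    using \<open>a < 0\<close> by (intro powr_mono2') auto
  also have "(max B 1 powr (1 / a)) powr a = max B 1"
    using \<open>a < 0\<close> by (simp add: powr_powr)
  finally show "B \<le> s powr a"
    by simp
qed

text \<open>The next two identities are the algebraic core of the derivative of \<rho> and of the PDE.
  Their variables stand for F = f(y), Fg = F^\<gamma>, sa = s^-\<alpha>, sg = s^(-1/\<gamma>), gx = \<nabla>f(y) \<cdot> x,
  v = \<nabla>f(y) \<cdot> h, where y = s^-\<alpha> x is the foot of the characteristic, (h, k) is the increment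
  in (x, t) and ds the resulting increment of s.\<close>
lemma rho_derivative_identity:
  fixes F Fg s sa sg D v gx k c t \<gamma> \<alpha> ds :: real
  assumes nz: "F \<noteq> 0" "s \<noteq> 0" "D \<noteq> 0" "\<gamma> \<noteq> 0"
    and D: "D = 1 - c * t * \<gamma> * \<alpha> * (Fg / F) * (sa / s) * gx" and root: "c * t * Fg = 1 - s"
    and ds: "ds = (- (c * k * Fg) - c * t * \<gamma> * Fg * (sa * v) / F) / D"
  shows "F * (sg * (ds * (- 1 / \<gamma>) / s)) + (sa * v + (sa * (ds * (- \<alpha>) / s)) * gx) * sg
       = (sg * sa / s / D) * v + c * Fg * (\<alpha> * (sg * sa / s) * gx + (F / \<gamma>) * (sg / s)) / D * k"
proof -
  have "s * D = s - c * t * \<gamma> * \<alpha> * Fg * sa * gx / F"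
    using D nz by (simp add: field_simps)
  then have sD: "s * D + c * t * Fg + c * t * \<gamma> * \<alpha> * Fg * sa * gx / F = 1"
    using root by linarith
  have "F * (sg * (ds * (- 1 / \<gamma>) / s)) + (sa * v + (sa * (ds * (- \<alpha>) / s)) * gx) * sg
      = sg * sa * v + (c * k * Fg + c * t * \<gamma> * Fg * (sa * v) / F) / D
          * (F * sg / (\<gamma> * s) + \<alpha> * sa * gx * sg / s)"
    unfolding ds using nz by (simp add: field_simps)
  also have "\<dots> = (sg * sa / s / D) * v * (s * D + c * t * Fg + c * t * \<gamma> * \<alpha> * Fg * sa * gx / F)
        + c * Fg * (\<alpha> * (sg * sa / s) * gx + (F / \<gamma>) * (sg / s)) / D * k"
    using nz by (simp add: field_simps)
  finally show ?thesis
    unfolding sD by simp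
qed

lemma pde_identity:
  fixes F Fg s sa sg D gx c t \<gamma> \<alpha> d :: real
  assumes nz: "F \<noteq> 0" "s \<noteq> 0" "D \<noteq> 0" "\<gamma> \<noteq> 0"
    and D: "D = 1 - c * t * \<gamma> * \<alpha> * (Fg / F) * (sa / s) * gx" and root: "c * t * Fg = 1 - s"
    and c_\<alpha>: "c * \<alpha> = 1 + \<gamma>" and c_d: "c = \<gamma> * d"
  shows "c * Fg * (\<alpha> * (sg * sa / s) * gx + (F / \<gamma>) * (sg / s)) / D
           - (1 + \<gamma>) * (Fg / s) * ((sg * sa / s / D) * gx)
       = d * (F * sg) * (Fg / s)"
proof -
  have lhs: "c * Fg * (\<alpha> * (sg * sa / s) * gx + (F / \<gamma>) * (sg / s)) / D
      - (1 + \<gamma>) * (Fg / s) * ((sg * sa / s / D) * gx)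
     = sg / (s * D) * ((c * \<alpha>) * Fg * sa * gx + (c / \<gamma>) * Fg * F - (1 + \<gamma>) * Fg * sa * gx / s)"
    using nz by (simp add: field_simps)
  have rhs: "d * (F * sg) * (Fg / s) = sg / (s * D) * (d * F * Fg * D)"
    using nz by (simp add: field_simps)
  have D_expanded: "d * F * Fg * D = d * F * Fg - (c * \<alpha>) * (\<gamma> * d * t * Fg) * Fg * sa * gx / s"
    unfolding D using nz by (simp add: field_simps)
  have root': "\<gamma> * d * t * Fg = 1 - s"
    using root c_d by (simp add: algebra_simps)
  have c_\<gamma>: "c / \<gamma> = d"
    using c_d nz by simp
  have "(c * \<alpha>) * Fg * sa * gx + (c / \<gamma>) * Fg * F - (1 + \<gamma>) * Fg * sa * gx / s
      = d * F * Fg * D"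
    unfolding D_expanded root' c_\<gamma> c_\<alpha> using nz by (simp add: field_simps)
  then show ?thesis
    unfolding lhs rhs by simp
qed

text \<open>The parameter d enters only through c = \<gamma> d; it is the dimension in the application.\<close>
locale radial_blowup =
  fixes f :: "'a::real_inner \<Rightarrow> real" and G :: "'a \<Rightarrow> 'a" and \<gamma> d c \<alpha> T :: real
  assumes gamma_pos: "0 < \<gamma>" and d_pos: "0 < d"
    and f_deriv: "\<And>x. (f has_derivative (\<lambda>h. G x \<bullet> h)) (at x)"
    and G_cont: "continuous_on UNIV G"
    and f_nonneg: "\<And>x. 0 \<le> f x"
    and f_antimono: "\<And>x y. norm x \<le> norm y \<Longrightarrow> f y \<le> f x"
    and f_0_pos: "0 < f 0"
    and c_def: "c = \<gamma> * d" and alpha_def: "\<alpha> = (1 + \<gamma>) / c"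
    and T_def: "T = 1 / (c * f 0 powr \<gamma>)"
begin

lemma c_pos: "0 < c"
  using gamma_pos d_pos by (simp add: c_def)

lemma alpha_pos: "0 < \<alpha>"
  using gamma_pos c_pos by (simp add: alpha_def)

lemma c_alpha: "c * \<alpha> = 1 + \<gamma>"
  using c_pos by (simp add: alpha_def)

lemma T_pos: "0 < T"
  using c_pos f_0_pos by (simp add: T_def)

lemma c_T: "c * T * f 0 powr \<gamma> = 1"
  using c_pos f_0_pos by (simp add: T_def)

lemma f_powr_le: "f x powr \<gamma> \<le> f 0 powr \<gamma>"
  using f_antimono[of 0 x] f_nonneg gamma_pos by (simp add: powr_mono2)

lemma f_continuous: "continuous_on UNIV f"
  using f_deriv by (meson has_derivative_continuous continuous_at_imp_continuous_on)

lemma f_powr_continuous: "continuous_on UNIV (\<lambda>y. f y powr \<gamma>)"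
  by (rule continuous_on_powr'[OF f_continuous continuous_on_const]) (use f_nonneg gamma_pos in auto)

lemma G_zero_where_f_zero:
  assumes "f x = 0" shows "G x = 0"
proof -
  have "(\<lambda>h. G x \<bullet> h) = (\<lambda>h. 0)"
    by (rule differential_zero_maxmin[of x UNIV f]) (use f_deriv f_nonneg assms in auto)
  then show ?thesis
    by (metis inner_eq_zero_iff)
qed

lemma inner_G_self_nonpos: "G y \<bullet> y \<le> 0"
proof (rule inner_gradient_nonpos_if_antimono_on_ray[OF f_deriv])
  fix r :: real assume "1 \<le> r"
  then have "norm y \<le> norm (r *\<^sub>R y)"
    using mult_right_mono[of 1 r "norm y"] by simp
  then show "f (r *\<^sub>R y) \<le> f y"
    by (rule f_antimono)
qed

abbreviation strip :: "('a \<times> real) set" where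
  "strip \<equiv> UNIV \<times> {0..<T}"

text \<open>The characteristic starting at y at time 0 is the ray x = s^\<alpha> y with
  s = 1 - c t f(y)^\<gamma>; hence (x, t) lies on the characteristic starting at s^-\<alpha> x
  exactly when char_eqn s x t = 0.\<close>
definition char_eqn :: "real \<Rightarrow> 'a \<Rightarrow> real \<Rightarrow> real" where
  "char_eqn s x t = s - 1 + c * t * f (s powr (- \<alpha>) *\<^sub>R x) powr \<gamma>"

lemma char_eqn_increasing:
  assumes "0 \<le> t" "0 < s" "s < s'"
  shows "char_eqn s x t < char_eqn s' x t"
proof -
  have "s' powr (- \<alpha>) \<le> s powr (- \<alpha>)"
    using assms alpha_pos by (simp add: powr_mono2')
  then have "norm (s' powr (- \<alpha>) *\<^sub>R x) \<le> norm (s powr (- \<alpha>) *\<^sub>R x)"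
    by (simp add: mult_right_mono)
  then have "f (s powr (- \<alpha>) *\<^sub>R x) powr \<gamma> \<le> f (s' powr (- \<alpha>) *\<^sub>R x) powr \<gamma>"
    using f_antimono f_nonneg gamma_pos by (simp add: powr_mono2)
  then have "c * t * f (s powr (- \<alpha>) *\<^sub>R x) powr \<gamma> \<le> c * t * f (s' powr (- \<alpha>) *\<^sub>R x) powr \<gamma>"
    using c_pos assms by (simp add: mult_left_mono)
  then show ?thesis
    using assms by (simp add: char_eqn_def)
qed

lemma char_eqn_continuous_in_s:
  assumes "0 < a" shows "continuous_on {a..b} (\<lambda>s. char_eqn s x t)"
proof -
  have "continuous_on {a..b} (\<lambda>s. s powr (- \<alpha>) *\<^sub>R x)"
    using assms by (intro continuous_intros) auto
  then have "continuous_on {a..b} (\<lambda>s. f (s powr (- \<alpha>) *\<^sub>R x) powr \<gamma>)"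
    by (rule continuous_on_compose2[OF f_powr_continuous]) auto
  then show ?thesis
    unfolding char_eqn_def
    by (intro continuous_on_add continuous_on_diff continuous_on_mult_left continuous_on_id
        continuous_on_const)
qed

lemma char_eqn_continuous:
  assumes "0 < s" shows "continuous (at p within S) (\<lambda>p. char_eqn s (fst p) (snd p))"
proof -
  have "continuous_on UNIV (\<lambda>p :: 'a \<times> real. s powr (- \<alpha>) *\<^sub>R fst p)"
    by (intro continuous_intros)
  then have "continuous_on UNIV (\<lambda>p :: 'a \<times> real. f (s powr (- \<alpha>) *\<^sub>R fst p) powr \<gamma>)"
    by (rule continuous_on_compose2[OF f_powr_continuous]) auto
  then have "continuous_on UNIV (\<lambda>p. char_eqn s (fst p) (snd p))"
    unfolding char_eqn_def
    by (intro continuous_on_add continuous_on_diff continuous_on_mult continuous_on_const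
        continuous_on_snd continuous_on_id)
  then show ?thesis
    by (metis UNIV_I continuous_at_imp_continuous_within continuous_on_eq_continuous_at open_UNIV)
qed

lemma char_eqn_root_exists:
  assumes "0 \<le> t" "t < T" shows "\<exists>s>0. char_eqn s x t = 0"
proof -
  define a where "a = 1 - c * t * f 0 powr \<gamma>"
  have "c * t * f 0 powr \<gamma> < c * T * f 0 powr \<gamma>"
    using assms c_pos f_0_pos by (simp add: mult_strict_right_mono)
  then have "0 < a"
    using c_T by (simp add: a_def)
  have "char_eqn a x t = c * t * (f (a powr (- \<alpha>) *\<^sub>R x) powr \<gamma> - f 0 powr \<gamma>)"
    unfolding char_eqn_def a_def by (simp add: algebra_simps)
  also have "\<dots> \<le> 0"
    using c_pos assms f_powr_le by (intro mult_nonneg_nonpos) auto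
  finally have "char_eqn a x t \<le> 0" .
  moreover have "0 \<le> char_eqn 1 x t"
    using c_pos assms by (simp add: char_eqn_def)
  moreover have "a \<le> 1"
    using c_pos assms f_0_pos by (simp add: a_def)
  ultimately obtain s where "a \<le> s" "char_eqn s x t = 0"
    using IVT'[of "\<lambda>s. char_eqn s x t"] char_eqn_continuous_in_s[OF \<open>0 < a\<close>] by blast
  then show ?thesis
    using \<open>0 < a\<close> by (intro exI[of _ s]) auto
qed

text \<open>Only meaningful for 0 \<le> t < T; elsewhere THE picks an unspecified value.\<close>
definition \<sigma> :: "'a \<Rightarrow> real \<Rightarrow> real" where
  "\<sigma> x t = (THE s. 0 < s \<and> char_eqn s x t = 0)"

lemma sigma_root:
  assumes "0 \<le> t" "t < T" shows "0 < \<sigma> x t \<and> char_eqn (\<sigma> x t) x t = 0"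
  unfolding \<sigma>_def
proof (rule theI')
  show "\<exists>!s. 0 < s \<and> char_eqn s x t = 0"
    using char_eqn_root_exists[OF assms] char_eqn_increasing[OF assms(1)]
    by (metis less_irrefl linorder_neqE_linordered_idom)
qed

lemma sigma_pos: "0 \<le> t \<Longrightarrow> t < T \<Longrightarrow> 0 < \<sigma> x t"
  using sigma_root by blast

lemma sigma_neq_0:
  assumes "0 \<le> t" "t < T" shows "\<sigma> x t \<noteq> 0"
  using sigma_pos[OF assms, of x] by simp

lemma sigma_eqI:
  assumes "0 \<le> t" "t < T" "0 < s" "char_eqn s x t = 0" shows "\<sigma> x t = s"
  using sigma_root[OF assms(1,2)] char_eqn_increasing[OF assms(1)] assms(3,4)
  by (metis less_irrefl linorder_neqE_linordered_idom)

lemma sigma_less: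
  assumes "0 \<le> t" "t < T" "0 < s" "0 < char_eqn s x t" shows "\<sigma> x t < s"
  by (rule increasing_root_less_iff(1)[where \<phi> = "\<lambda>s. char_eqn s x t", THEN iffD2])
    (use char_eqn_increasing[OF assms(1)] sigma_root[OF assms(1,2)] assms(3,4) in auto)

definition foot :: "'a \<Rightarrow> real \<Rightarrow> 'a" where
  "foot x t = \<sigma> x t powr (- \<alpha>) *\<^sub>R x"

lemma sigma_eqn:
  assumes "0 \<le> t" "t < T" shows "c * t * f (foot x t) powr \<gamma> = 1 - \<sigma> x t"
  using sigma_root[OF assms, of x] unfolding char_eqn_def foot_def by linarith

lemma sigma_le_1:
  assumes "0 \<le> t" "t < T" shows "\<sigma> x t \<le> 1"
proof -
  have "0 \<le> c * t * f (foot x t) powr \<gamma>"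
    using c_pos assms by simp
  with sigma_eqn[OF assms, of x] show ?thesis
    by simp
qed

lemma sigma_0: "\<sigma> x 0 = 1"
  by (rule sigma_eqI) (use T_pos in \<open>auto simp: char_eqn_def\<close>)

lemma norm_le_norm_foot:
  assumes "0 \<le> t" "t < T" shows "norm x \<le> norm (foot x t)"
proof -
  have "\<sigma> x t powr \<alpha> \<le> 1 powr \<alpha>"
    using sigma_pos[OF assms, of x] sigma_le_1[OF assms, of x] alpha_pos by (intro powr_mono2) auto
  then have "1 \<le> \<sigma> x t powr (- \<alpha>)"
    using sigma_pos[OF assms, of x] by (simp add: powr_minus field_simps)
  then show ?thesis
    unfolding foot_def by (simp add: mult_le_cancel_right1)
qed

lemma sigma_continuous: "continuous_on strip (\<lambda>p. \<sigma> (fst p) (snd p))"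
  unfolding continuous_on_eq_continuous_within
proof
  fix p0 assume "p0 \<in> strip"
  show "continuous (at p0 within strip) (\<lambda>p. \<sigma> (fst p) (snd p))"
    by (rule continuous_within_increasing_root[where \<Phi> = "\<lambda>s p. char_eqn s (fst p) (snd p)"])
      (use \<open>p0 \<in> strip\<close> sigma_root char_eqn_increasing char_eqn_continuous in auto)
qed

lemma flat_point:
  assumes "0 \<le> t" "t < T" "f (foot x t) = 0"
  shows "\<sigma> x t = 1" "foot x t = x" "f x = 0"
proof -
  show \<sigma>_1: "\<sigma> x t = 1"
    using sigma_eqn[OF assms(1,2), of x] assms(3) gamma_pos by simp
  show "foot x t = x"
    by (simp add: foot_def \<sigma>_1)
  with assms(3) show "f x = 0"
    by simp
qed

lemma foot_continuous: "continuous_on strip (\<lambda>p. foot (fst p) (snd p))"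
  unfolding foot_def
  by (intro continuous_intros sigma_continuous) (auto simp: sigma_neq_0)

lemma f_foot_continuous: "continuous_on strip (\<lambda>p. f (foot (fst p) (snd p)))"
  by (rule continuous_on_compose2[OF f_continuous foot_continuous]) auto

lemma f_foot_powr_continuous: "continuous_on strip (\<lambda>p. f (foot (fst p) (snd p)) powr \<gamma>)"
  by (rule continuous_on_compose2[OF f_powr_continuous foot_continuous]) auto

lemma G_foot_continuous: "continuous_on strip (\<lambda>p. G (foot (fst p) (snd p)))"
  by (rule continuous_on_compose2[OF G_cont foot_continuous]) auto

lemma inner_G_foot_nonpos:
  assumes "0 \<le> t" "t < T" shows "G (foot x t) \<bullet> x \<le> 0"
proof -
  have "\<sigma> x t powr (- \<alpha>) * (G (foot x t) \<bullet> x) \<le> 0"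
    using inner_G_self_nonpos[of "foot x t"] unfolding foot_def by simp
  then show ?thesis
    using sigma_pos[OF assms, of x] by (simp add: mult_le_0_iff)
qed

text \<open>The s-derivative of char_eqn at its root, with f^(\<gamma>-1) written as f^\<gamma> / f so that the
  expression is meaningful where f vanishes. It is at least 1 because f decreases outwards.\<close>
definition denom :: "'a \<Rightarrow> real \<Rightarrow> real" where
  "denom x t = 1 - c * t * \<gamma> * \<alpha> * (f (foot x t) powr \<gamma> / f (foot x t))
      * (\<sigma> x t powr (- \<alpha>) / \<sigma> x t) * (G (foot x t) \<bullet> x)"

lemma denom_ge_1:
  assumes "0 \<le> t" "t < T" shows "1 \<le> denom x t"
proof -
  define K where "K = c * t * \<gamma> * \<alpha> * (f (foot x t) powr \<gamma> / f (foot x t))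
      * (\<sigma> x t powr (- \<alpha>) / \<sigma> x t)"
  have "0 \<le> K"
    using c_pos gamma_pos alpha_pos assms sigma_pos[OF assms, of x] f_nonneg by (simp add: K_def)
  then have "K * (G (foot x t) \<bullet> x) \<le> 0"
    using inner_G_foot_nonpos[OF assms, of x] by (rule mult_nonneg_nonpos)
  moreover have "denom x t = 1 - K * (G (foot x t) \<bullet> x)"
    by (simp add: denom_def K_def)
  ultimately show ?thesis
    by simp
qed

lemma has_derivative_f_comp:
  "(g has_derivative g') (at y within A) \<Longrightarrow>
    ((\<lambda>z. f (g z)) has_derivative (\<lambda>h. G (g y) \<bullet> g' h)) (at y within A)"
  by (rule has_derivative_compose[OF _ f_deriv])

lemma char_eqn_has_derivative:
  assumes "0 < s" "0 < f (s powr (- \<alpha>) *\<^sub>R x)"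
  shows "((\<lambda>q. char_eqn (fst q) (fst (snd q)) (snd (snd q))) has_derivative
     (\<lambda>(a, h, k). a + c * k * f (s powr (- \<alpha>) *\<^sub>R x) powr \<gamma>
        + c * t * \<gamma> * (f (s powr (- \<alpha>) *\<^sub>R x) powr \<gamma> / f (s powr (- \<alpha>) *\<^sub>R x))
          * (G (s powr (- \<alpha>) *\<^sub>R x) \<bullet> ((a * (- \<alpha>) * (s powr (- \<alpha>) / s)) *\<^sub>R x + s powr (- \<alpha>) *\<^sub>R h))))
     (at (s, x, t))"
  unfolding char_eqn_def
  apply (rule has_derivative_eq_rhs)
   apply ((rule derivative_eq_intros has_derivative_f_comp refl) | (simp add: assms; fail))+
  apply (auto simp: fun_eq_iff inner_add_right algebra_simps divide_simps)
  done

lemma sigma_has_derivative: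
  assumes t0: "0 \<le> t0" "t0 < T" and pos: "0 < f (foot x0 t0)"
  shows "((\<lambda>p. \<sigma> (fst p) (snd p)) has_derivative
     (\<lambda>hk. - (c * snd hk * f (foot x0 t0) powr \<gamma>
          + c * t0 * \<gamma> * (f (foot x0 t0) powr \<gamma> / f (foot x0 t0))
            * (\<sigma> x0 t0 powr (- \<alpha>) * (G (foot x0 t0) \<bullet> fst hk))) / denom x0 t0))
     (at (x0, t0) within strip)"
proof -
  define s0 where "s0 = \<sigma> x0 t0"
  have "0 < s0"
    using sigma_pos[OF t0] by (simp add: s0_def)
  have pos': "0 < f (s0 powr (- \<alpha>) *\<^sub>R x0)"
    using pos by (simp add: foot_def s0_def)
  define D\<Phi> where "D\<Phi> = (\<lambda>(a, h :: 'a, k :: real). a + c * k * f (s0 powr (- \<alpha>) *\<^sub>R x0) powr \<gamma>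
      + c * t0 * \<gamma> * (f (s0 powr (- \<alpha>) *\<^sub>R x0) powr \<gamma> / f (s0 powr (- \<alpha>) *\<^sub>R x0))
        * (G (s0 powr (- \<alpha>) *\<^sub>R x0) \<bullet> ((a * (- \<alpha>) * (s0 powr (- \<alpha>) / s0)) *\<^sub>R x0 + s0 powr (- \<alpha>) *\<^sub>R h)))"
  have D\<Phi>_1: "D\<Phi> (1, 0) = denom x0 t0"
    by (simp add: D\<Phi>_def denom_def foot_def s0_def algebra_simps zero_prod_def)
  have D\<Phi>_0: "D\<Phi> (0, hk) = c * snd hk * f (foot x0 t0) powr \<gamma>
      + c * t0 * \<gamma> * (f (foot x0 t0) powr \<gamma> / f (foot x0 t0))
        * (\<sigma> x0 t0 powr (- \<alpha>) * (G (foot x0 t0) \<bullet> fst hk))" for hk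
    by (cases hk) (simp add: D\<Phi>_def foot_def s0_def algebra_simps)
  have "((\<lambda>p. \<sigma> (fst p) (snd p)) has_derivative (\<lambda>h. - D\<Phi> (0, h) / D\<Phi> (1, 0)))
      (at (x0, t0) within strip)"
  proof (rule has_derivative_implicit_real)
    show "((\<lambda>q. char_eqn (fst q) (fst (snd q)) (snd (snd q))) has_derivative D\<Phi>)
        (at (\<sigma> (fst (x0, t0)) (snd (x0, t0)), (x0, t0)))"
      using char_eqn_has_derivative[OF \<open>0 < s0\<close> pos', of t0] by (simp add: D\<Phi>_def s0_def)
    show "D\<Phi> (1, 0) \<noteq> 0"
      using D\<Phi>_1 denom_ge_1[OF t0, of x0] by simp
    show "continuous (at (x0, t0) within strip) (\<lambda>p. \<sigma> (fst p) (snd p))"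
      using sigma_continuous t0 by (simp add: continuous_on_eq_continuous_within)
  qed (use sigma_root t0 in auto)
  then show ?thesis
    unfolding D\<Phi>_0 D\<Phi>_1 .
qed

definition rho :: "'a \<Rightarrow> real \<Rightarrow> real" where
  "rho x t = f (foot x t) * \<sigma> x t powr (- 1 / \<gamma>)"

definition grad_rho :: "'a \<Rightarrow> real \<Rightarrow> 'a" where
  "grad_rho x t = (\<sigma> x t powr (- 1 / \<gamma>) * \<sigma> x t powr (- \<alpha>) / \<sigma> x t / denom x t) *\<^sub>R G (foot x t)"

definition dt_rho :: "'a \<Rightarrow> real \<Rightarrow> real" where
  "dt_rho x t = c * f (foot x t) powr \<gamma>
      * (\<alpha> * (\<sigma> x t powr (- 1 / \<gamma>) * \<sigma> x t powr (- \<alpha>) / \<sigma> x t) * (G (foot x t) \<bullet> x)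
         + (f (foot x t) / \<gamma>) * (\<sigma> x t powr (- 1 / \<gamma>) / \<sigma> x t)) / denom x t"

lemma rho_has_derivative_nonflat:
  assumes t0: "0 \<le> t0" "t0 < T" and pos: "0 < f (foot x0 t0)"
  shows "((\<lambda>p. rho (fst p) (snd p)) has_derivative
      (\<lambda>hk. grad_rho x0 t0 \<bullet> fst hk + dt_rho x0 t0 * snd hk)) (at (x0, t0) within strip)"
  unfolding rho_def foot_def
  apply (rule has_derivative_eq_rhs)
   apply ((rule derivative_eq_intros has_derivative_f_comp refl
        sigma_has_derivative[OF t0 pos, unfolded foot_def]) | (simp add: t0 sigma_pos; fail))+
  apply (rule ext)
  apply (simp only: fst_conv snd_conv mult_zero_left add_0_left inner_add_right inner_scaleR_right
      grad_rho_def dt_rho_def inner_scaleR_left foot_def)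
  apply (rule rho_derivative_identity[where t = t0])
        apply (use pos in \<open>simp add: foot_def\<close>)
       apply (use sigma_pos[OF t0, of x0] in simp)
      apply (use denom_ge_1[OF t0, of x0] in simp)
     apply (use gamma_pos in simp)
    apply (simp add: denom_def foot_def)
   apply (use sigma_eqn[OF t0, of x0] in \<open>simp add: foot_def\<close>)
  apply (simp add: algebra_simps)
  done

lemma rho_nonneg_le:
  assumes "0 \<le> t" "t < T"
  shows "0 \<le> rho x t" "rho x t \<le> f x * \<sigma> x t powr (- 1 / \<gamma>)"
  using f_nonneg[of "foot x t"] f_antimono[OF norm_le_norm_foot[OF assms]]
  by (auto simp: rho_def intro: mult_right_mono)

lemma rho_has_derivative_flat:
  assumes t0: "0 \<le> t0" "t0 < T" and flat: "f (foot x0 t0) = 0"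
  shows "((\<lambda>p. rho (fst p) (snd p)) has_derivative (\<lambda>_. 0)) (at (x0, t0) within strip)"
proof -
  note flat_pt = flat_point[OF t0 flat]
  have f': "(f has_derivative (\<lambda>_. 0)) (at x0)"
    using f_deriv[of x0] G_zero_where_f_zero[OF flat_pt(3)] by simp
  have rho_0: "rho (fst (x0, t0)) (snd (x0, t0)) = 0"
    using flat by (simp add: rho_def)
  have "(x0, t0) \<in> strip"
    using t0 by simp
  with sigma_continuous have "((\<lambda>p. \<sigma> (fst p) (snd p)) \<longlongrightarrow> \<sigma> x0 t0) (at (x0, t0) within strip)"
    unfolding continuous_on_def by fastforce
  then have "((\<lambda>p. \<sigma> (fst p) (snd p)) \<longlongrightarrow> 1) (at (x0, t0) within strip)"
    by (simp add: flat_pt(1))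
  then have "eventually (\<lambda>p. 1 / 2 < \<sigma> (fst p) (snd p)) (at (x0, t0) within strip)"
    by (rule order_tendstoD(1)) simp
  moreover have "eventually (\<lambda>p. p \<in> strip) (at (x0, t0) within strip)"
    by (simp add: eventually_at_filter)
  ultimately have "eventually (\<lambda>p. \<bar>rho (fst p) (snd p)\<bar> \<le> (1 / 2) powr (- 1 / \<gamma>) * \<bar>f (fst p)\<bar>)
      (at (x0, t0) within strip)"
  proof eventually_elim
    case (elim p)
    then have t: "0 \<le> snd p" "snd p < T"
      by auto
    have "\<sigma> (fst p) (snd p) powr (- 1 / \<gamma>) \<le> (1 / 2) powr (- 1 / \<gamma>)"
      using elim(1) gamma_pos by (intro powr_mono2') auto
    with rho_nonneg_le[OF t, of "fst p"] f_nonneg[of "fst p"]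
    have "rho (fst p) (snd p) \<le> f (fst p) * (1 / 2) powr (- 1 / \<gamma>)"
      by (meson mult_left_mono order_trans)
    with rho_nonneg_le(1)[OF t, of "fst p"] f_nonneg[of "fst p"] show ?case
      by (simp add: mult.commute)
  qed
  from has_derivative_zero_if_dominated[where g = "\<lambda>p. rho (fst p) (snd p)", OF f' flat_pt(3) rho_0 this]
  show ?thesis .
qed

lemma rho_has_derivative:
  assumes "0 \<le> t" "t < T"
  shows "((\<lambda>p. rho (fst p) (snd p)) has_derivative
      (\<lambda>hk. grad_rho x t \<bullet> fst hk + dt_rho x t * snd hk)) (at (x, t) within strip)"
proof (cases "f (foot x t) = 0")
  case True
  note flat_pt = flat_point[OF assms True]
  have "grad_rho x t = 0" "dt_rho x t = 0"
    using True G_zero_where_f_zero[OF flat_pt(3)] gamma_pos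
    by (simp_all add: grad_rho_def dt_rho_def flat_pt(2))
  with rho_has_derivative_flat[OF assms True] show ?thesis
    by simp
next
  case False
  with f_nonneg[of "foot x t"] have "0 < f (foot x t)"
    by simp
  then show ?thesis
    by (rule rho_has_derivative_nonflat[OF assms])
qed

lemma denom_continuous:
  assumes p: "p \<in> strip" and nonflat: "f (foot (fst p) (snd p)) \<noteq> 0"
  shows "continuous (at p within strip) (\<lambda>p. denom (fst p) (snd p))"
proof -
  have "\<sigma> (fst p) (snd p) \<noteq> 0"
    using p by (auto simp: sigma_neq_0)
  with nonflat show ?thesis
    using sigma_continuous f_foot_continuous f_foot_powr_continuous G_foot_continuous p
    unfolding denom_def continuous_on_def continuous_within
    by (intro tendsto_intros) (auto intro: tendsto_fst)
qed

lemma grad_rho_continuous: "continuous_on strip (\<lambda>p. grad_rho (fst p) (snd p))"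
proof -
  let ?s = "\<lambda>p. \<sigma> (fst p) (snd p)"
  have "continuous_on strip (\<lambda>p. ((?s p powr (- 1 / \<gamma>) * ?s p powr (- \<alpha>) / ?s p)
      *\<^sub>R G (foot (fst p) (snd p))) /\<^sub>R denom (fst p) (snd p))"
  proof (rule continuous_on_scaleR_inverse_ge1)
    show "continuous_on strip (\<lambda>p. (?s p powr (- 1 / \<gamma>) * ?s p powr (- \<alpha>) / ?s p)
        *\<^sub>R G (foot (fst p) (snd p)))"
      by (intro continuous_intros sigma_continuous G_foot_continuous)
        (auto simp: sigma_neq_0)
    show "1 \<le> denom (fst p) (snd p)" if "p \<in> strip" for p
      using that denom_ge_1 by auto
    show "continuous (at p within strip) (\<lambda>p. denom (fst p) (snd p))"
      if "p \<in> strip" "(?s p powr (- 1 / \<gamma>) * ?s p powr (- \<alpha>) / ?s p) *\<^sub>R G (foot (fst p) (snd p)) \<noteq> 0"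
      for p
      using that G_zero_where_f_zero denom_continuous by fastforce
  qed
  then show ?thesis
    by (simp add: grad_rho_def divide_inverse mult.commute)
qed

lemma dt_rho_continuous: "continuous_on strip (\<lambda>p. dt_rho (fst p) (snd p))"
proof -
  let ?s = "\<lambda>p. \<sigma> (fst p) (snd p)" and ?F = "\<lambda>p. f (foot (fst p) (snd p))"
  define N where "N p = c * ?F p powr \<gamma>
      * (\<alpha> * (?s p powr (- 1 / \<gamma>) * ?s p powr (- \<alpha>) / ?s p) * (G (foot (fst p) (snd p)) \<bullet> fst p)
         + (?F p / \<gamma>) * (?s p powr (- 1 / \<gamma>) / ?s p))" for p
  have "continuous_on strip (\<lambda>p. N p /\<^sub>R denom (fst p) (snd p))"
  proof (rule continuous_on_scaleR_inverse_ge1)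
    show "continuous_on strip N"
      unfolding N_def
      by (intro f_foot_powr_continuous continuous_intros sigma_continuous G_foot_continuous
          f_foot_continuous)
        (use gamma_pos in \<open>auto simp: sigma_neq_0\<close>)
    show "1 \<le> denom (fst p) (snd p)" if "p \<in> strip" for p
      using that denom_ge_1 by auto
    show "continuous (at p within strip) (\<lambda>p. denom (fst p) (snd p))"
      if "p \<in> strip" "N p \<noteq> 0" for p
      using that denom_continuous by (fastforce simp: N_def)
  qed
  then show ?thesis
    by (simp add: dt_rho_def N_def divide_inverse mult.commute)
qed

lemma rho_powr_gamma:
  assumes "0 \<le> t" "t < T" shows "rho x t powr \<gamma> = f (foot x t) powr \<gamma> / \<sigma> x t"
proof -
  have "rho x t powr \<gamma> = f (foot x t) powr \<gamma> * (\<sigma> x t powr (- 1 / \<gamma>)) powr \<gamma>"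
    unfolding rho_def using f_nonneg by (simp add: powr_mult)
  also have "(\<sigma> x t powr (- 1 / \<gamma>)) powr \<gamma> = \<sigma> x t powr (- 1)"
    using gamma_pos by (simp add: powr_powr)
  also have "\<dots> = 1 / \<sigma> x t"
    using sigma_pos[OF assms, of x] by (simp add: powr_minus_divide)
  finally show ?thesis
    by simp
qed

lemma rho_pde:
  assumes t: "0 \<le> t" "t < T"
  shows "dt_rho x t - (1 + \<gamma>) * rho x t powr \<gamma> * (x \<bullet> grad_rho x t) = d * rho x t powr (1 + \<gamma>)"
proof (cases "f (foot x t) = 0")
  case True
  then show ?thesis
    using gamma_pos by (simp add: dt_rho_def rho_def)
next
  case False
  with f_nonneg[of "foot x t"] have F: "0 < f (foot x t)"
    by simp
  have s: "0 < \<sigma> x t"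
    using sigma_pos[OF t] .
  have "rho x t powr (1 + \<gamma>) = rho x t * rho x t powr \<gamma>"
    using F s by (simp add: rho_def powr_add)
  moreover have "x \<bullet> grad_rho x t
      = (\<sigma> x t powr (- 1 / \<gamma>) * \<sigma> x t powr (- \<alpha>) / \<sigma> x t / denom x t) * (G (foot x t) \<bullet> x)"
    by (simp add: grad_rho_def inner_commute)
  moreover have "dt_rho x t - (1 + \<gamma>) * (f (foot x t) powr \<gamma> / \<sigma> x t)
        * ((\<sigma> x t powr (- 1 / \<gamma>) * \<sigma> x t powr (- \<alpha>) / \<sigma> x t / denom x t) * (G (foot x t) \<bullet> x))
      = d * (f (foot x t) * \<sigma> x t powr (- 1 / \<gamma>)) * (f (foot x t) powr \<gamma> / \<sigma> x t)"
    unfolding dt_rho_def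
  proof (rule pde_identity)
    show "denom x t \<noteq> 0"
      using denom_ge_1[OF t, of x] by simp
    show "c * t * f (foot x t) powr \<gamma> = 1 - \<sigma> x t"
      by (rule sigma_eqn[OF t])
    show "denom x t = 1 - c * t * \<gamma> * \<alpha> * (f (foot x t) powr \<gamma> / f (foot x t))
        * (\<sigma> x t powr (- \<alpha>) / \<sigma> x t) * (G (foot x t) \<bullet> x)"
      by (rule denom_def)
  qed (use F s gamma_pos c_alpha c_def in auto)
  ultimately show ?thesis
    unfolding rho_powr_gamma[OF t] by (simp add: rho_def)
qed

lemma rho_initial: "rho x 0 = f x"
  by (simp add: rho_def foot_def sigma_0)

lemma rho_along_characteristic:
  assumes t: "0 \<le> t" "t < T"
  shows "rho ((1 - c * f y powr \<gamma> * t) powr \<alpha> *\<^sub>R y) t = f y * (1 - c * f y powr \<gamma> * t) powr (- 1 / \<gamma>)"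
proof -
  define s where "s = 1 - c * f y powr \<gamma> * t"
  have "c * f y powr \<gamma> * t \<le> c * f 0 powr \<gamma> * t"
    using c_pos t f_powr_le by (intro mult_right_mono mult_left_mono) auto
  also have "\<dots> < c * f 0 powr \<gamma> * T"
    using c_pos f_0_pos t by simp
  finally have "0 < s"
    using c_T by (simp add: s_def mult_ac)
  have cancel: "s powr (- \<alpha>) *\<^sub>R (s powr \<alpha> *\<^sub>R y) = y"
    using \<open>0 < s\<close> by (simp add: powr_minus_divide)
  have \<sigma>_s: "\<sigma> (s powr \<alpha> *\<^sub>R y) t = s"
    by (rule sigma_eqI[OF t \<open>0 < s\<close>]) (unfold char_eqn_def cancel, simp add: s_def)
  have foot_y: "foot (s powr \<alpha> *\<^sub>R y) t = y"
    unfolding foot_def \<sigma>_s cancel by (rule refl)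
  show ?thesis
    unfolding s_def[symmetric] rho_def foot_y \<sigma>_s by (rule refl)
qed

lemma sigma_tendsto_zero: "filterlim (\<lambda>p. \<sigma> (fst p) (snd p)) (at_right 0) (at (0, T) within strip)"
proof -
  have in_strip: "eventually (\<lambda>p. p \<in> strip) (at (0, T) within strip)"
    by (simp add: eventually_at_filter)
  then have pos: "eventually (\<lambda>p. 0 < \<sigma> (fst p) (snd p)) (at (0, T) within strip)"
    by eventually_elim (auto intro: sigma_pos)
  have "((\<lambda>p. \<sigma> (fst p) (snd p)) \<longlongrightarrow> 0) (at (0, T) within strip)"
  proof (rule order_tendstoI)
    fix a :: real assume "a < 0"
    from pos show "eventually (\<lambda>p. a < \<sigma> (fst p) (snd p)) (at (0, T) within strip)"
      by eventually_elim (use \<open>a < 0\<close> in simp)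
  next
    fix \<epsilon> :: real assume "0 < \<epsilon>"
    have "char_eqn \<epsilon> 0 T = \<epsilon>"
      using c_T by (simp add: char_eqn_def)
    with \<open>0 < \<epsilon>\<close> char_eqn_continuous[OF \<open>0 < \<epsilon>\<close>, of "(0, T)" strip]
    have "eventually (\<lambda>p. 0 < char_eqn \<epsilon> (fst p) (snd p)) (at (0, T) within strip)"
      unfolding continuous_within by (auto intro: order_tendstoD(1))
    with in_strip show "eventually (\<lambda>p. \<sigma> (fst p) (snd p) < \<epsilon>) (at (0, T) within strip)"
      by eventually_elim (auto intro: sigma_less \<open>0 < \<epsilon>\<close>)
  qed
  with pos show ?thesis
    by (simp add: filterlim_at eventually_mono)
qed

lemma f_foot_tendsto: "((\<lambda>p. f (foot (fst p) (snd p))) \<longlongrightarrow> f 0) (at (0, T) within strip)"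
proof -
  have \<sigma>: "((\<lambda>p. \<sigma> (fst p) (snd p)) \<longlongrightarrow> 0) (at (0, T) within strip)"
    using sigma_tendsto_zero by (simp add: filterlim_at)
  have t: "(snd \<longlongrightarrow> T) (at (0, T) within strip)"
    using tendsto_snd[OF tendsto_ident_at[of "(0, T)" strip]] by simp
  have "eventually (\<lambda>p. 0 < snd p) (at (0, T) within strip)"
    using order_tendstoD(1)[OF t T_pos] .
  moreover have "eventually (\<lambda>p. p \<in> strip) (at (0, T) within strip)"
    by (simp add: eventually_at_filter)
  ultimately have "eventually (\<lambda>p. (1 - \<sigma> (fst p) (snd p)) / (c * snd p)
      = f (foot (fst p) (snd p)) powr \<gamma>) (at (0, T) within strip)"
  proof eventually_elim
    case (elim p)
    then show ?case
      using sigma_eqn[of "snd p" "fst p"] c_pos by (auto simp: field_simps)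
  qed
  moreover have "((\<lambda>p. (1 - \<sigma> (fst p) (snd p)) / (c * snd p)) \<longlongrightarrow> (1 - 0) / (c * T))
      (at (0, T) within strip)"
    using c_pos T_pos by (intro tendsto_intros \<sigma> t) auto
  moreover have "(1 - 0) / (c * T) = f 0 powr \<gamma>"
    using c_T c_pos T_pos by (simp add: field_simps)
  ultimately have "((\<lambda>p. f (foot (fst p) (snd p)) powr \<gamma>) \<longlongrightarrow> f 0 powr \<gamma>) (at (0, T) within strip)"
    by (simp add: Lim_transform_eventually)
  then have "((\<lambda>p. (f (foot (fst p) (snd p)) powr \<gamma>) powr (1 / \<gamma>)) \<longlongrightarrow> (f 0 powr \<gamma>) powr (1 / \<gamma>))
      (at (0, T) within strip)"
    by (rule tendsto_powr[OF _ tendsto_const]) (use f_0_pos in simp)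
  then show ?thesis
    using gamma_pos f_nonneg by (simp add: powr_powr)
qed

lemma rho_blowup: "filterlim (\<lambda>p. rho (fst p) (snd p)) at_top (at (0, T) within strip)"
proof -
  have "- 1 / \<gamma> < 0"
    using gamma_pos by simp
  from filterlim_compose[OF filterlim_powr_at_right_0[OF this] sigma_tendsto_zero]
  have "filterlim (\<lambda>p. \<sigma> (fst p) (snd p) powr (- 1 / \<gamma>)) at_top (at (0, T) within strip)" .
  from f_foot_tendsto f_0_pos this show ?thesis
    unfolding rho_def by (rule filterlim_tendsto_pos_mult_at_top)
qed

end


lemma radial_nonincr_antimono:
  assumes "radial_nonincr f" and "norm x \<le> norm y"
  shows "f y \<le> f x"
proof -
  obtain ft where "\<And>x. f x = ft (norm x)" and "\<And>r s. 0 \<le> r \<Longrightarrow> r \<le> s \<Longrightarrow> ft s \<le> ft r"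
    using assms(1) unfolding radial_nonincr_def by blast
  with assms(2) show ?thesis
    by simp
qed

lemma radial_blowup_instance:
  fixes f :: "real^'n \<Rightarrow> real"
  assumes "0 < \<gamma>" and "C1_fun f" and "\<forall>x. 0 \<le> f x" and "\<exists>x. f x \<noteq> 0" and "radial_nonincr f"
  obtains G where "radial_blowup f G \<gamma> (real CARD('n)) (\<gamma> * real CARD('n))
    ((1 + \<gamma>) / (\<gamma> * real CARD('n))) (1 / (\<gamma> * real CARD('n) * Sup (range f) powr \<gamma>))"
proof -
  obtain G :: "real^'n \<Rightarrow> real^'n" where
    f': "\<And>x. (f has_derivative (\<lambda>h. G x \<bullet> h)) (at x)" and G: "continuous_on UNIV G"
    using assms(2) unfolding C1_fun_def by blast
  note antimono = radial_nonincr_antimono[OF assms(5)]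
  obtain x1 where "f x1 \<noteq> 0"
    using assms(4) by blast
  with assms(3) have "0 < f x1"
    by (simp add: order_less_le)
  moreover have "f x1 \<le> f 0"
    by (rule antimono) simp
  ultimately have "0 < f 0"
    by simp
  have "Sup (range f) = f 0"
    by (rule cSup_eq_maximum) (auto intro: antimono)
  have "radial_blowup f G \<gamma> (real CARD('n)) (\<gamma> * real CARD('n))
    ((1 + \<gamma>) / (\<gamma> * real CARD('n))) (1 / (\<gamma> * real CARD('n) * Sup (range f) powr \<gamma>))"
  proof unfold_locales
    show "0 < real CARD('n)"
      by simp
    show "\<And>x. 0 \<le> f x"
      using assms(3) by blast
    show "1 / (\<gamma> * real CARD('n) * Sup (range f) powr \<gamma>) = 1 / (\<gamma> * real CARD('n) * f 0 powr \<gamma>)"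
      by (simp add: \<open>Sup (range f) = f 0\<close>)
  qed (fact assms(1) f' G antimono \<open>0 < f 0\<close> refl)+
  then show ?thesis
    by (rule that)
qed

theorem mainTheorem1:
  fixes f :: "real^'n \<Rightarrow> real" and \<gamma> :: real
  assumes "\<gamma> > 0"
    and "C1_fun f" and "bounded (range f)"
    and "\<forall>x. f x \<ge> 0" and "\<exists>x. f x \<noteq> 0"
    and "radial_nonincr f"
  defines "tstar \<equiv> 1 / (\<gamma> * real CARD('n) * (Sup (range f)) powr \<gamma>)"
  shows "\<exists>(\<rho> :: real^'n \<Rightarrow> real \<Rightarrow> real) \<rho>t gr\<rho>.
      C1_on_strip \<rho> \<rho>t gr\<rho> tstar \<and>
      (\<forall>x t. 0 \<le> t \<and> t < tstar \<longrightarrow>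
          \<rho>t x t - (1 + \<gamma>) * (\<rho> x t) powr \<gamma> * (x \<bullet> gr\<rho> x t)
            = real CARD('n) * (\<rho> x t) powr (1 + \<gamma>)) \<and>
      (\<forall>x. \<rho> x 0 = f x) \<and>
      (\<forall>x0 t. 0 \<le> t \<and> t < tstar \<longrightarrow>
          \<rho> (((1 - \<gamma> * real CARD('n) * (f x0) powr \<gamma> * t)
                  powr ((1 + \<gamma>) / (\<gamma> * real CARD('n)))) *\<^sub>R x0) t
            = f x0 * (1 - \<gamma> * real CARD('n) * (f x0) powr \<gamma> * t) powr (-1 / \<gamma>)) \<and>
      filterlim (\<lambda>(x,t). \<rho> x t) at_top (at (0, tstar) within (UNIV \<times> {0..<tstar}))"
proof -
  obtain G where "radial_blowup f G \<gamma> (real CARD('n)) (\<gamma> * real CARD('n))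
      ((1 + \<gamma>) / (\<gamma> * real CARD('n))) tstar"
    using radial_blowup_instance[OF assms(1,2,4,5,6)] unfolding tstar_def .
  then interpret radial_blowup f G \<gamma> "real CARD('n)" "\<gamma> * real CARD('n)"
      "(1 + \<gamma>) / (\<gamma> * real CARD('n))" tstar .
  show ?thesis
  proof (intro exI conjI allI impI)
    show "C1_on_strip rho dt_rho grad_rho tstar"
      unfolding C1_on_strip_def case_prod_unfold
      using rho_has_derivative dt_rho_continuous grad_rho_continuous by blast
  next
    fix x t assume "0 \<le> t \<and> t < tstar"
    then show "dt_rho x t - (1 + \<gamma>) * rho x t powr \<gamma> * (x \<bullet> grad_rho x t)
        = real CARD('n) * rho x t powr (1 + \<gamma>)"
      by (simp add: rho_pde)
  next
    fix x show "rho x 0 = f x"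
      by (rule rho_initial)
  next
    fix x0 t assume "0 \<le> t \<and> t < tstar"
    then show "rho ((1 - \<gamma> * real CARD('n) * f x0 powr \<gamma> * t)
          powr ((1 + \<gamma>) / (\<gamma> * real CARD('n))) *\<^sub>R x0) t
        = f x0 * (1 - \<gamma> * real CARD('n) * f x0 powr \<gamma> * t) powr (- 1 / \<gamma>)"
      by (simp add: rho_along_characteristic)
  next
    show "filterlim (\<lambda>(x, t). rho x t) at_top (at (0, tstar) within UNIV \<times> {0..<tstar})"
      unfolding case_prod_unfold by (rule rho_blowup)
  qed
qed

end
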